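(* Let $\beta$ be irrational with continued fraction denominators $(q'_n)_{n\ge1}$. Let $f:\mathbb{T}\to\mathbb{R}$ be real analytic and not a trigonometric polynomial, with Fourier coefficients $a_k$, and let $(l_k)_{k\ge1}$ be a strictly increasing sequence of positive integers with $a_{l_k}\neq0$ and $|a_{l_k}|/T_{l_k}\to\infty$, where $T_n=\sum_{j\ge2}|a_{jn}|\,|jn|$. For $k\ge1$ let $\eta(k)$ be the smallest integer with $q'_{\eta(k)}>2k^2/|a_{l_k}|^2$. For $n,m\ge1$ let $V_{n,m}=\{\alpha\in\mathbb{R}\setminus\mathbb{Q}: q_n(\alpha)=l_m \text{ and } q_{n+1}(\alpha)>2q'_{\eta(m)}n^2\}$, $\mathcal{U}_j=\bigcup_{n\ge1}V_{n,j}$, and $\mathcal{U}=\bigcap_{M\ge1}\bigcup_{j\ge M}\mathcal{U}_j$. Then $\mathcal{U}$ is a dense $G_\delta$ subset of $\mathbb{R}$.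
   Context: For an irrational $\gamma=[c_0;c_1,c_2,\dots]$, its continued fraction denominators are $q_0=1$, $q_1=c_1$, $q_n=c_nq_{n-1}+q_{n-2}$; $q_n(\gamma)$ denotes the $n$-th one. $\mathbb{T}=\mathbb{R}/\mathbb{Z}$. *)

theory Defs
  imports "HOL-Analysis.Analysis"
begin

fun cf_rem :: "real \<Rightarrow> nat \<Rightarrow> real" where
  "cf_rem g 0 = g"
| "cf_rem g (Suc n) = 1 / frac (cf_rem g n)"

definition cf_digit :: "real \<Rightarrow> nat \<Rightarrow> int" where
  "cf_digit g n = \<lfloor>cf_rem g n\<rfloor>"

fun cf_den :: "real \<Rightarrow> nat \<Rightarrow> int" where
  "cf_den g 0 = 1"
| "cf_den g (Suc 0) = cf_digit g 1"
| "cf_den g (Suc (Suc n)) = cf_digit g (Suc (Suc n)) * cf_den g (Suc n) + cf_den g n"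

definition real_analytic :: "(real \<Rightarrow> real) \<Rightarrow> bool" where
  "real_analytic f \<longleftrightarrow>
     (\<forall>x. \<exists>r>0. \<exists>c::nat \<Rightarrow> real. \<forall>y. \<bar>y - x\<bar> < r \<longrightarrow> (\<lambda>n. c n * (y - x) ^ n) sums f y)"

text \<open>Fourier coefficients of a 1-periodic function (T = R/Z identified with [0,1)).\<close>
definition fourier_coeff :: "(real \<Rightarrow> real) \<Rightarrow> int \<Rightarrow> complex" where
  "fourier_coeff f k = integral {0..1} (\<lambda>x. complex_of_real (f x) * cis (- 2 * pi * of_int k * x))"

definition trig_polynomial :: "(real \<Rightarrow> real) \<Rightarrow> bool" where
  "trig_polynomial f \<longleftrightarrow>
     (\<exists>N::nat. \<exists>c::int \<Rightarrow> complex. \<forall>x.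
        complex_of_real (f x) = (\<Sum>k\<in>{- int N..int N}. c k * cis (2 * pi * of_int k * x)))"

definition Tsum :: "(real \<Rightarrow> real) \<Rightarrow> nat \<Rightarrow> real" where
  "Tsum f n = (\<Sum>j. cmod (fourier_coeff f (int ((j + 2) * n))) * real ((j + 2) * n))"

definition eta :: "real \<Rightarrow> (real \<Rightarrow> real) \<Rightarrow> (nat \<Rightarrow> nat) \<Rightarrow> nat \<Rightarrow> nat" where
  "eta \<beta> f l k = (LEAST n. n \<ge> 1 \<and>
      real_of_int (cf_den \<beta> n) > 2 * real k ^ 2 / (cmod (fourier_coeff f (int (l k)))) ^ 2)"

definition Vset :: "real \<Rightarrow> (real \<Rightarrow> real) \<Rightarrow> (nat \<Rightarrow> nat) \<Rightarrow> nat \<Rightarrow> nat \<Rightarrow> real set" where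
  "Vset \<beta> f l n m = {\<alpha>. \<alpha> \<notin> \<rat> \<and> cf_den \<alpha> n = int (l m) \<and>
      cf_den \<alpha> (Suc n) > 2 * cf_den \<beta> (eta \<beta> f l m) * int n ^ 2}"

definition Uj :: "real \<Rightarrow> (real \<Rightarrow> real) \<Rightarrow> (nat \<Rightarrow> nat) \<Rightarrow> nat \<Rightarrow> real set" where
  "Uj \<beta> f l j = (\<Union>n\<in>{1..}. Vset \<beta> f l n j)"

definition Uset :: "real \<Rightarrow> (real \<Rightarrow> real) \<Rightarrow> (nat \<Rightarrow> nat) \<Rightarrow> real set" where
  "Uset \<beta> f l = (\<Inter>M\<in>{1..}. \<Union>j\<in>{M..}. Uj \<beta> f l j)"

end

(*
  Each U_j only constrains finitely many continued fraction denominators q_n(alpha), and these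
  are locally constant at irrational alpha. So every tail A_M = (UN j>=M. U_j) is the trace on
  the irrationals of an open set, and U = (INT M. A_M) is a countable intersection of open sets
  with the irrationals, itself a countable intersection of the dense open sets R - {r}. By
  Baire's theorem it remains to show that each A_M is dense.

  Near any x there is a reduced fraction m/L with L = l_j for some large j: a Legendre sieve shows
  that the fractions with denominator L in lowest terms are (8 / sqrt L)-dense. Running Euclid's
  algorithm on m/L backwards and ending with a huge partial quotient gives irrationals alpha
  arbitrarily close to m/L with q_n(alpha) = L for some n <= L and q_(n+1)(alpha) as large as
  desired, i.e. alpha in V_(n,j). Only the growth of l enters.
*)

theory Submission
  imports Defs
begin

section \<open>Convergents and the shift of a continued fraction\<close>

definition cf_tail :: "real \<Rightarrow> real" where
  "cf_tail g = 1 / frac g"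

fun cf_num :: "real \<Rightarrow> nat \<Rightarrow> int" where
  "cf_num g 0 = cf_digit g 0"
| "cf_num g (Suc 0) = cf_digit g 1 * cf_digit g 0 + 1"
| "cf_num g (Suc (Suc n)) = cf_digit g (Suc (Suc n)) * cf_num g (Suc n) + cf_num g n"

lemma cf_rem_Suc: "cf_rem g (Suc n) = cf_rem (cf_tail g) n"
  by (induction n) (simp_all add: cf_tail_def)

lemma cf_digit_Suc: "cf_digit g (Suc n) = cf_digit (cf_tail g) n"
  by (simp only: cf_digit_def cf_rem_Suc)

lemma cf_digit_0: "cf_digit g 0 = \<lfloor>g\<rfloor>"
  by (simp add: cf_digit_def)

lemma cf_num_0: "cf_num g 0 = \<lfloor>g\<rfloor>"
  by (simp add: cf_digit_0)

lemma cf_den_num_Suc: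
  "cf_den g (Suc n) = cf_num (cf_tail g) n \<and>
   cf_num g (Suc n) = cf_digit g 0 * cf_num (cf_tail g) n + cf_den (cf_tail g) n"
  by (induction g n rule: cf_num.induct) (simp_all add: cf_digit_Suc algebra_simps)

context
  fixes \<beta> :: real and c :: int
  assumes \<beta>_gt_1: "1 < \<beta>"
begin

lemma cf_tail_prepend: "cf_tail (of_int c + 1 / \<beta>) = \<beta>"
  using \<beta>_gt_1 by (simp add: cf_tail_def frac_eq)

lemma cf_digit_prepend: "cf_digit (of_int c + 1 / \<beta>) 0 = c"
  using \<beta>_gt_1 by (simp add: cf_digit_0 floor_eq_iff)

lemma cf_den_prepend: "cf_den (of_int c + 1 / \<beta>) (Suc n) = cf_num \<beta> n"
  using cf_den_num_Suc by (simp add: cf_tail_prepend)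

lemma cf_num_prepend: "cf_num (of_int c + 1 / \<beta>) (Suc n) = c * cf_num \<beta> n + cf_den \<beta> n"
  using cf_den_num_Suc by (simp add: cf_tail_prepend cf_digit_prepend)

end

lemma cf_tail_add_of_int: "cf_tail (x + of_int k) = cf_tail x"
  by (simp add: cf_tail_def)

lemma cf_den_add_of_int: "cf_den (x + of_int k) n = cf_den x n"
proof -
  have "cf_digit (y + of_int k) (Suc j) = cf_digit y (Suc j)" for y j
    by (simp only: cf_digit_Suc cf_tail_add_of_int)
  then show ?thesis
    by (induction x n rule: cf_den.induct) simp_all
qed

section \<open>Irrationals with a prescribed convergent\<close>

lemma irrational_inverse: "(x::real) \<notin> \<rat> \<Longrightarrow> 1 / x \<notin> \<rat>"
  by (metis Rats_inverse inverse_eq_divide inverse_inverse_eq)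

lemma irrational_add_of_int: "(x::real) \<notin> \<rat> \<Longrightarrow> of_int c + x \<notin> \<rat>"
  by (simp add: Rats_add_iff)

lemma exists_irrational_gt: "\<exists>y::real. y \<notin> \<rat> \<and> B < y"
proof -
  obtain z :: real where z: "z \<notin> \<rat>"
    using countable_rat uncountable_UNIV_real by (metis UNIV_eq_I)
  define k where "k = \<lceil>\<bar>B\<bar> - z\<rceil> + 1"
  have "of_int k + z \<notin> \<rat>"
    using z by (rule irrational_add_of_int)
  moreover have "B < of_int k + z"
    unfolding k_def by linarith
  ultimately show ?thesis by blast
qed

lemma abs_inverse_diff_le:
  fixes a b \<beta> :: real
  assumes "0 < a" "a \<le> b" "1 \<le> \<beta>"
  shows "\<bar>1 / \<beta> - a / b\<bar> \<le> \<bar>\<beta> - b / a\<bar>"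
proof -
  have "\<bar>1 / \<beta> - a / b\<bar> = \<bar>\<beta> - b / a\<bar> * (a / (\<beta> * b))"
    using assms by (simp add: abs_mult_pos' [symmetric] abs_minus_commute field_simps)
  moreover have "a / (\<beta> * b) \<le> 1"
    using assms mult_mono[of 1 \<beta> a b] by simp
  ultimately show ?thesis
    by (metis abs_ge_zero mult_left_le)
qed

text \<open>The witness is \<open>[p - 1; 1, y]\<close> with \<open>y\<close> huge: the partial quotient 1 puts the
  denominator 1 at index 1 rather than 0.\<close>

lemma exists_irrational_with_integer_convergent:
  fixes p :: nat and C \<epsilon> :: real
  assumes "1 \<le> p" "0 < \<epsilon>"
  shows "\<exists>\<alpha>::real. \<alpha> \<notin> \<rat> \<and> \<bar>\<alpha> - p\<bar> < \<epsilon> \<and> cf_den \<alpha> 1 = 1 \<and> cf_num \<alpha> 1 = p \<and>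
           C < cf_den \<alpha> 2 \<and> C < cf_num \<alpha> 2"
proof -
  obtain y :: real where y: "y \<notin> \<rat>" "max (\<bar>C\<bar> + 1) (max 1 (1 / \<epsilon>)) < y"
    using exists_irrational_gt by blast
  then have y1: "1 < y" and yC: "C < \<lfloor>y\<rfloor>"
    by linarith+
  define \<beta> where "\<beta> = of_int 1 + 1 / y"
  define \<alpha> where "\<alpha> = of_int (int p - 1) + 1 / \<beta>"
  have \<beta>1: "1 < \<beta>"
    using y1 by (simp add: \<beta>_def)
  have "\<alpha> \<notin> \<rat>"
    unfolding \<alpha>_def \<beta>_def using y by (intro irrational_add_of_int irrational_inverse)
  moreover have "\<bar>\<alpha> - p\<bar> < \<epsilon>"
  proof -
    have "\<bar>\<alpha> - p\<bar> = 1 / (y + 1)"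
      using y1 by (simp add: \<alpha>_def \<beta>_def field_simps)
    also have "\<dots> < \<epsilon>"
      using y assms by (simp add: field_simps)
    finally show ?thesis .
  qed
  moreover have "cf_num \<beta> 0 = 1" "cf_den \<beta> 0 = 1"
    "cf_num \<beta> 1 = \<lfloor>y\<rfloor> + 1" "cf_den \<beta> 1 = \<lfloor>y\<rfloor>"
    using cf_digit_prepend[OF y1, of 1] cf_num_prepend[OF y1, of 1 0] cf_den_prepend[OF y1, of 1 0]
    by (simp_all add: \<beta>_def cf_num_0 cf_digit_0)
  moreover have "cf_den \<alpha> (Suc n) = cf_num \<beta> n"
    "cf_num \<alpha> (Suc n) = (int p - 1) * cf_num \<beta> n + cf_den \<beta> n" for n
    unfolding \<alpha>_def by (rule cf_den_prepend[OF \<beta>1], rule cf_num_prepend[OF \<beta>1])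
  moreover have "0 \<le> (real p - 1) * (real_of_int \<lfloor>y\<rfloor> + 1)"
    using assms y1 by simp
  ultimately show ?thesis
    using yC by (intro exI[of _ \<alpha>]) (simp del: cf_den.simps cf_num.simps add: numeral_2_eq_2)
qed

lemma exists_irrational_with_convergent_step:
  fixes L r c :: nat and C \<epsilon> \<beta> :: real
  assumes "1 \<le> r" "r < L" "\<beta> \<notin> \<rat>" "\<bar>\<beta> - L / r\<bar> < min \<epsilon> (1 / r)"
    and "cf_den \<beta> n = r" "cf_num \<beta> n = L" "0 \<le> C" "C < cf_den \<beta> (Suc n)" "C < cf_num \<beta> (Suc n)"
  shows "\<exists>\<alpha>::real. \<alpha> \<notin> \<rat> \<and> \<bar>\<alpha> - (c * L + r) / L\<bar> < \<epsilon> \<and>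
           cf_den \<alpha> (Suc n) = L \<and> cf_num \<alpha> (Suc n) = c * L + r \<and>
           C < cf_den \<alpha> (Suc (Suc n)) \<and> C < cf_num \<alpha> (Suc (Suc n))"
proof -
  have "1 \<le> (real L - 1) / r"
    using assms(1,2) by (simp add: field_simps)
  with assms(4) have \<beta>1: "1 < \<beta>"
    unfolding diff_divide_distrib by linarith
  define \<alpha> where "\<alpha> = of_int (int c) + 1 / \<beta>"
  have "\<alpha> \<notin> \<rat>"
    unfolding \<alpha>_def using assms(3) by (intro irrational_add_of_int irrational_inverse)
  moreover have "\<bar>\<alpha> - (c * L + r) / L\<bar> < \<epsilon>"
  proof -
    have "\<bar>\<alpha> - (c * L + r) / L\<bar> = \<bar>1 / \<beta> - r / L\<bar>"
      using assms(2) by (simp add: \<alpha>_def add_divide_distrib)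
    also have "\<dots> \<le> \<bar>\<beta> - L / r\<bar>"
      using assms(1,2) \<beta>1 by (intro abs_inverse_diff_le) auto
    finally show ?thesis
      using assms(4) by linarith
  qed
  moreover have "cf_den \<alpha> (Suc m) = cf_num \<beta> m" "cf_num \<alpha> (Suc m) = c * cf_num \<beta> m + cf_den \<beta> m" for m
    unfolding \<alpha>_def by (rule cf_den_prepend[OF \<beta>1], rule cf_num_prepend[OF \<beta>1])
  moreover have "C < real_of_int (int c * cf_num \<beta> (Suc n) + cf_den \<beta> (Suc n))"
  proof -
    have "0 \<le> real c * cf_num \<beta> (Suc n)"
      using assms(7,9) by simp
    then show ?thesis
      using assms(8) by simp
  qed
  ultimately show ?thesis
    using assms by (intro exI[of _ \<alpha>]) (auto simp del: cf_den.simps cf_num.simps)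
qed

text \<open>Euclid's algorithm run backwards: with \<open>p = c L + r\<close>, take \<open>\<alpha> = c + 1/\<beta>\<close> for \<open>\<beta>\<close>
  close to \<open>L / r\<close>. Numerators are tracked because those of \<open>\<beta>\<close> become the denominators
  of \<open>\<alpha>\<close>.\<close>

lemma exists_irrational_with_convergent:
  fixes L p :: nat and C \<epsilon> :: real
  assumes "1 \<le> L" "1 \<le> p" "coprime p L" "0 < \<epsilon>"
  shows "\<exists>\<alpha>::real. \<exists>n. \<alpha> \<notin> \<rat> \<and> \<bar>\<alpha> - p / L\<bar> < \<epsilon> \<and> 1 \<le> n \<and> n \<le> L \<and>
           cf_den \<alpha> n = L \<and> cf_num \<alpha> n = p \<and> C < cf_den \<alpha> (Suc n) \<and> C < cf_num \<alpha> (Suc n)"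
  using assms
proof (induction L arbitrary: p C \<epsilon> rule: less_induct)
  case (less L)
  show ?case
  proof (cases "L = 1")
    case True
    obtain \<alpha> :: real where "\<alpha> \<notin> \<rat>" "\<bar>\<alpha> - p\<bar> < \<epsilon>" "cf_den \<alpha> 1 = 1" "cf_num \<alpha> 1 = p"
      "C < cf_den \<alpha> 2" "C < cf_num \<alpha> 2"
      using exists_irrational_with_integer_convergent[of p \<epsilon> C] less.prems by blast
    with True show ?thesis
      by (intro exI[of _ \<alpha>] exI[of _ 1]) (simp del: cf_den.simps cf_num.simps add: numeral_2_eq_2)
  next
    case False
    with less.prems have "2 \<le> L"
      by simp
    define c r where "c = p div L" and "r = p mod L"
    have p_eq: "p = c * L + r" and "r < L"
      using \<open>2 \<le> L\<close> by (simp_all add: c_def r_def)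
    have "coprime r L"
      using less.prems(3) \<open>2 \<le> L\<close> by (simp add: r_def)
    then have "1 \<le> r"
      using \<open>2 \<le> L\<close> by (cases "r = 0") auto
    then obtain \<beta> n where "\<beta> \<notin> \<rat>" "\<bar>\<beta> - L / r\<bar> < min \<epsilon> (1 / r)" "1 \<le> n" "n \<le> r"
      "cf_den \<beta> n = r" "cf_num \<beta> n = L" "max C 0 < cf_den \<beta> (Suc n)" "max C 0 < cf_num \<beta> (Suc n)"
      using less.IH[of r L "min \<epsilon> (1 / r)" "max C 0"] \<open>r < L\<close> \<open>coprime r L\<close> less.prems(4)
      by (auto simp: coprime_commute)
    with \<open>1 \<le> r\<close> \<open>r < L\<close> obtain \<alpha> where "\<alpha> \<notin> \<rat>" "\<bar>\<alpha> - p / L\<bar> < \<epsilon>" "cf_den \<alpha> (Suc n) = L"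
      "cf_num \<alpha> (Suc n) = p" "max C 0 < cf_den \<alpha> (Suc (Suc n))" "max C 0 < cf_num \<alpha> (Suc (Suc n))"
      unfolding p_eq by (metis exists_irrational_with_convergent_step max.cobounded2)
    with \<open>n \<le> r\<close> \<open>r < L\<close> show ?thesis
      by (intro exI[of _ \<alpha>] exI[of _ "Suc n"]) (simp del: cf_den.simps cf_num.simps)
  qed
qed

lemma exists_irrational_with_convergent_denominator:
  fixes L :: nat and m :: int and C \<epsilon> :: real
  assumes "1 \<le> L" "coprime m (int L)" "0 < \<epsilon>"
  shows "\<exists>\<alpha>::real. \<exists>n. \<alpha> \<notin> \<rat> \<and> \<bar>\<alpha> - m / L\<bar> < \<epsilon> \<and> 1 \<le> n \<and> n \<le> L \<and>
           cf_den \<alpha> n = L \<and> C < cf_den \<alpha> (Suc n)"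
proof -
  define k where "k = \<bar>m\<bar> + 1"
  define p where "p = nat (m + k * L)"
  have "k \<le> k * L"
    using assms(1) by (simp add: k_def)
  then have p: "int p = m + k * L" "1 \<le> p"
    unfolding p_def k_def by linarith+
  have "int L \<noteq> 0"
    using assms(1) by simp
  then have "coprime (int p) (int L) \<longleftrightarrow> coprime (int p mod int L) (int L)"
    by simp
  also have "int p mod int L = m mod int L"
    by (simp add: p(1))
  finally have "coprime p L"
    using assms(2) \<open>int L \<noteq> 0\<close> by simp
  then obtain \<alpha> n where \<alpha>: "\<alpha> \<notin> \<rat>" "\<bar>\<alpha> - p / L\<bar> < \<epsilon>" "1 \<le> n" "n \<le> L"
      "cf_den \<alpha> n = L" "C < cf_den \<alpha> (Suc n)"
    using exists_irrational_with_convergent[OF assms(1) p(2) _ assms(3), of C] by blast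
  have "real p = real_of_int (m + k * L)"
    by (metis p(1) of_int_of_nat_eq)
  then have "real p / L = m / L + k"
    using assms(1) by (simp add: field_simps)
  define \<alpha>' where "\<alpha>' = \<alpha> + of_int (- k)"
  have "\<bar>\<alpha>' - m / L\<bar> < \<epsilon>"
    using \<alpha>(2) \<open>real p / L = m / L + k\<close> by (simp add: \<alpha>'_def)
  moreover have "\<alpha>' \<notin> \<rat>"
    unfolding \<alpha>'_def add.commute[of \<alpha>] using \<alpha>(1) by (rule irrational_add_of_int)
  moreover have "cf_den \<alpha>' j = cf_den \<alpha> j" for j
    unfolding \<alpha>'_def by (rule cf_den_add_of_int)
  ultimately show ?thesis
    using \<alpha> by (intro exI[of _ \<alpha>'] exI[of _ n]) simp
qed

section \<open>Reduced fractions in short intervals\<close>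

definition sieve_survivors :: "int set \<Rightarrow> real \<Rightarrow> real \<Rightarrow> int set" where
  "sieve_survivors S X W = {m. X < of_int m \<and> of_int m \<le> X + W \<and> (\<forall>q\<in>S. \<not> q dvd m)}"

lemma finite_sieve_survivors: "finite (sieve_survivors S X W)"
proof (rule finite_subset)
  show "sieve_survivors S X W \<subseteq> {\<lfloor>X\<rfloor>..\<lceil>X + W\<rceil>}"
    unfolding sieve_survivors_def by (auto, linarith+)
qed simp

lemma card_sieve_survivors_empty:
  assumes "0 \<le> W"
  shows "\<bar>real (card (sieve_survivors {} X W)) - W\<bar> \<le> 1"
proof -
  have "sieve_survivors {} X W = {\<lfloor>X\<rfloor> + 1..\<lfloor>X + W\<rfloor>}"
    unfolding sieve_survivors_def by (auto simp: floor_less_iff le_floor_iff) linarith+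
  moreover have "\<lfloor>X\<rfloor> \<le> \<lfloor>X + W\<rfloor>"
    using assms by (simp add: floor_mono)
  ultimately have "real (card (sieve_survivors {} X W)) = of_int \<lfloor>X + W\<rfloor> - of_int \<lfloor>X\<rfloor>"
    by simp
  then show ?thesis
    by linarith
qed

lemma sieve_survivors_multiples:
  fixes q :: int
  assumes "prime q" "q \<notin> S" "\<forall>s\<in>S. prime s"
  shows "{m \<in> sieve_survivors S X W. q dvd m} = (\<lambda>k. q * k) ` sieve_survivors S (X / q) (W / q)"
proof -
  have q0: "0 < real_of_int q"
    using assms prime_gt_0_int by simp
  have unsieved: "(\<forall>s\<in>S. \<not> s dvd q * k) \<longleftrightarrow> (\<forall>s\<in>S. \<not> s dvd k)" for k
    using assms by (metis prime_dvd_mult_iff primes_dvd_imp_eq)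
  have window: "X < of_int (q * k) \<and> of_int (q * k) \<le> X + W \<longleftrightarrow>
      X / q < of_int k \<and> of_int k \<le> X / q + W / q" for k
    using q0 by (simp add: field_simps)
  have "q * k \<in> sieve_survivors S X W \<longleftrightarrow> k \<in> sieve_survivors S (X / q) (W / q)" for k
    unfolding sieve_survivors_def using unsieved window by blast
  then show ?thesis
    by (auto simp: dvd_def)
qed

lemma card_sieve_survivors_insert:
  fixes q :: int
  assumes "prime q" "q \<notin> S" "\<forall>s\<in>S. prime s"
  shows "real (card (sieve_survivors (insert q S) X W)) =
    real (card (sieve_survivors S X W)) - real (card (sieve_survivors S (X / q) (W / q)))"
proof -
  let ?B = "sieve_survivors S X W" and ?M = "{m \<in> sieve_survivors S X W. q dvd m}"
  have "sieve_survivors (insert q S) X W = ?B - ?M"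
    unfolding sieve_survivors_def by auto
  moreover have "?M \<subseteq> ?B" "finite ?B"
    by (auto simp: finite_sieve_survivors)
  ultimately have "real (card (sieve_survivors (insert q S) X W)) = real (card ?B) - real (card ?M)"
    by (simp add: card_Diff_subset card_mono finite_subset of_nat_diff)
  moreover have "inj_on (\<lambda>k. q * k) A" for A
    using assms prime_gt_0_int by (auto simp: inj_on_def)
  then have "card ?M = card (sieve_survivors S (X / q) (W / q))"
    unfolding sieve_survivors_multiples[OF assms] by (simp add: card_image)
  ultimately show ?thesis
    by simp
qed

theorem sieve_survivors_estimate:
  fixes S :: "int set"
  assumes "finite S" "\<forall>q\<in>S. prime q" "0 \<le> W"
  shows "\<bar>real (card (sieve_survivors S X W)) - W * (\<Prod>q\<in>S. 1 - 1 / q)\<bar> \<le> 2 ^ card S"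
  using assms
proof (induction S arbitrary: X W rule: finite_induct)
  case empty
  then show ?case
    using card_sieve_survivors_empty by simp
next
  case (insert q S)
  let ?P = "\<Prod>q\<in>S. 1 - 1 / real_of_int q"
  have "0 \<le> W / q"
    using insert.prems prime_gt_0_int[of q] by simp
  then have "\<bar>real (card (sieve_survivors S (X / q) (W / q))) - W / q * ?P\<bar> \<le> 2 ^ card S"
    using insert.IH[of "W / q" "X / q"] insert.prems by simp
  moreover have "\<bar>real (card (sieve_survivors S X W)) - W * ?P\<bar> \<le> 2 ^ card S"
    using insert.IH[of W X] insert.prems by simp
  moreover have "W * (\<Prod>q\<in>insert q S. 1 - 1 / real_of_int q) = W * ?P - W / q * ?P"
    using insert.hyps by (simp add: algebra_simps)
  ultimately show ?case
    using insert.hyps insert.prems card_sieve_survivors_insert[of q S X W]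
    by (simp add: abs_le_iff)
qed

lemma card_plus_two_le:
  fixes A :: "int set"
  assumes "finite A" "\<forall>a\<in>A. 2 \<le> a \<and> a < b" "2 \<le> b"
  shows "int (card A) + 2 \<le> b"
proof -
  have "card A \<le> card {2..<b}"
    using assms by (intro card_mono) auto
  then show ?thesis
    using assms(3) by simp
qed

lemma prod_one_minus_inverse_ge:
  fixes S :: "int set"
  assumes "finite S" "\<forall>q\<in>S. 2 \<le> q"
  shows "1 / (real (card S) + 1) \<le> (\<Prod>q\<in>S. 1 - 1 / real_of_int q)"
  using assms
proof (induction S rule: finite_linorder_max_induct)
  case empty
  then show ?case by simp
next
  case (insert b A)
  let ?n = "real (card A)"
  have b: "?n + 2 \<le> b"
    using card_plus_two_le[of A b] insert by simp
  then have "(?n + 1) / (?n + 2) \<le> 1 - 1 / b"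
    by (simp add: field_simps)
  moreover have "1 / (?n + 1) \<le> (\<Prod>q\<in>A. 1 - 1 / real_of_int q)"
    using insert by simp
  ultimately have "(?n + 1) / (?n + 2) * (1 / (?n + 1)) \<le> (1 - 1 / b) * (\<Prod>q\<in>A. 1 - 1 / real_of_int q)"
    using b by (intro mult_mono) simp_all
  moreover have "b \<notin> A"
    using insert by auto
  ultimately show ?case
    using insert by (simp add: add.commute)
qed

lemma fact_card_le_prod:
  fixes S :: "int set"
  assumes "finite S" "\<forall>q\<in>S. 2 \<le> q"
  shows "fact (card S + 1) \<le> (\<Prod>q\<in>S. q)"
  using assms
proof (induction S rule: finite_linorder_max_induct)
  case empty
  then show ?case by simp
next
  case (insert b A)
  have b: "int (card A) + 2 \<le> b"
    using card_plus_two_le[of A b] insert by simp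
  moreover have "fact (card A + 1) \<le> (\<Prod>q\<in>A. q)"
    using insert by simp
  ultimately have "(int (card A) + 2) * fact (card A + 1) \<le> b * (\<Prod>q\<in>A. q)"
    using b by (intro mult_mono) simp_all
  moreover have "b \<notin> A"
    using insert by auto
  ultimately show ?case
    using insert by (simp add: algebra_simps)
qed

lemma prod_prime_factors_le:
  fixes L :: int
  assumes "0 < L"
  shows "(\<Prod>p\<in>prime_factors L. p) \<le> L"
proof -
  have "(\<Prod>p\<in>prime_factors L. p) \<le> (\<Prod>p\<in>prime_factors L. p ^ multiplicity p L)"
  proof (rule prod_mono)
    fix p assume "p \<in> prime_factors L"
    then have "prime p" "0 < multiplicity p L"
      using assms prime_factors_multiplicity by auto
    then have "1 \<le> p" "1 \<le> multiplicity p L"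
      using prime_gt_0_int by (auto simp: int_one_le_iff_zero_less)
    then show "0 \<le> p \<and> p \<le> p ^ multiplicity p L"
      by (auto intro: self_le_power[of p "multiplicity p L", simplified])
  qed
  also have "\<dots> = L"
    using prime_factorization_int[OF assms] by simp
  finally show ?thesis .
qed

lemma square_mult_four_power_le_fact: "(w + 1) ^ 2 * 4 ^ w \<le> 64 * fact (w + 1 :: nat)"
proof (induction w)
  case 0
  then show ?case by simp
next
  case (Suc w)
  show ?case
  proof (cases "w < 4")
    case True
    then have "w = 0 \<or> w = 1 \<or> w = 2 \<or> w = 3"
      by auto
    then show ?thesis
      by (elim disjE) (simp_all add: fact_numeral power2_eq_square)
  next
    case False
    then have "4 * w \<le> w * w"
      by simp
    then have "4 * (w + 2) \<le> w * w + 2 * w + 1"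
      using False by arith
    also have "\<dots> = (w + 1) ^ 2"
      by (simp add: power2_eq_square)
    finally have "4 * (w + 2) \<le> (w + 1) ^ 2" .
    have "(Suc w + 1) ^ 2 * 4 ^ Suc w = (w + 2) * (4 * (w + 2)) * 4 ^ w"
      by (simp add: power2_eq_square algebra_simps)
    also have "\<dots> \<le> (w + 2) * (w + 1) ^ 2 * 4 ^ w"
      using \<open>4 * (w + 2) \<le> (w + 1) ^ 2\<close> by (intro mult_le_mono1 mult_le_mono2)
    also have "\<dots> \<le> (w + 2) * (64 * fact (w + 1))"
      using Suc.IH by (simp only: mult.assoc mult_le_mono2)
    also have "\<dots> = 64 * fact (Suc w + 1)"
      by simp
    finally show ?thesis .
  qed
qed

lemma card_prime_factors_bound:
  fixes L :: int
  assumes "0 < L"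
  defines "w \<equiv> card (prime_factors L)"
  shows "(real w + 1) * 2 ^ w \<le> 8 * sqrt L"
proof -
  have "\<forall>q\<in>prime_factors L. 2 \<le> q"
    by (auto intro: prime_ge_2_int)
  then have "fact (w + 1) \<le> L"
    using fact_card_le_prod[of "prime_factors L"] prod_prime_factors_le[OF assms(1)]
    unfolding w_def by simp
  then have "(fact (w + 1) :: real) \<le> real_of_int L"
    by (metis of_int_fact of_int_le_iff)
  moreover have "real ((w + 1) ^ 2 * 4 ^ w) \<le> real (64 * fact (w + 1))"
    using square_mult_four_power_le_fact[of w] by (simp only: of_nat_le_iff)
  then have "(real w + 1) ^ 2 * 4 ^ w \<le> 64 * (fact (w + 1) :: real)"
    by (simp only: of_nat_mult of_nat_power of_nat_add of_nat_1 of_nat_numeral of_nat_fact)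
  ultimately have "(real w + 1) ^ 2 * 4 ^ w \<le> 64 * real_of_int L"
    by linarith
  moreover have "((real w + 1) * 2 ^ w) ^ 2 = (real w + 1) ^ 2 * 4 ^ w"
    by (simp add: power_mult_distrib power_mult [symmetric] mult.commute[of w 2] power_mult)
  ultimately have "((real w + 1) * 2 ^ w) ^ 2 \<le> 8 ^ 2 * L"
    by simp
  then have "(real w + 1) * 2 ^ w \<le> sqrt (8 ^ 2 * L)"
    by (rule real_le_rsqrt)
  then show ?thesis
    by (simp add: real_sqrt_mult)
qed

lemma coprime_if_no_common_prime_factor:
  fixes m L :: int
  assumes "L \<noteq> 0" "\<And>p. p \<in> prime_factors L \<Longrightarrow> \<not> p dvd m"
  shows "coprime m L"
proof (rule ccontr)
  assume "\<not> coprime m L"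
  then obtain p where "prime p" "p dvd gcd m L"
    using assms(1) by (metis gcd_eq_0_iff prime_divisorE is_unit_gcd)
  then show False
    using assms(1) assms(2)[of p] by (simp add: prime_factors_dvd)
qed

text \<open>With \<open>w\<close> prime factors of \<open>L\<close>, the sieve error \<open>2 ^ w\<close> is beaten by the main term
  \<open>\<epsilon> L \<Prod>(1 - 1/q) \<ge> \<epsilon> L / (w + 1)\<close> because \<open>(w + 1)! \<le> L\<close>.\<close>

theorem exists_coprime_in_window:
  fixes L :: nat and \<epsilon> X :: real
  assumes "1 \<le> L" "0 < \<epsilon>" "64 / \<epsilon> ^ 2 < real L"
  shows "\<exists>m::int. X < m \<and> m \<le> X + \<epsilon> * L \<and> coprime m (int L)"
proof -
  define S where "S = prime_factors (int L)"
  define W where "W = \<epsilon> * L"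
  have S: "finite S" "\<forall>q\<in>S. prime q" "\<forall>q\<in>S. 2 \<le> q"
    by (auto simp: S_def intro: prime_ge_2_int)
  have "0 \<le> W"
    using assms by (simp add: W_def)
  have "8 * sqrt L < W"
  proof -
    have "8 ^ 2 * real L < W ^ 2"
      using assms by (simp add: W_def field_simps power2_eq_square)
    then have "sqrt (8 ^ 2 * real L) < sqrt (W ^ 2)"
      by (rule real_sqrt_less_mono)
    then show ?thesis
      using \<open>0 \<le> W\<close> by (simp add: real_sqrt_mult)
  qed
  moreover have "(real (card S) + 1) * 2 ^ card S \<le> 8 * sqrt L"
    using card_prime_factors_bound[of "int L"] assms by (simp add: S_def)
  ultimately have "2 ^ card S < W * (1 / (real (card S) + 1))"
    by (simp add: field_simps)
  also have "\<dots> \<le> W * (\<Prod>q\<in>S. 1 - 1 / real_of_int q)"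
    using prod_one_minus_inverse_ge[OF S(1,3)] \<open>0 \<le> W\<close> by (rule mult_left_mono)
  finally have "0 < real (card (sieve_survivors S X W))"
    using sieve_survivors_estimate[OF S(1,2) \<open>0 \<le> W\<close>, of X] by linarith
  then have "sieve_survivors S X W \<noteq> {}"
    by (simp add: card_gt_0_iff)
  then obtain m where m: "m \<in> sieve_survivors S X W"
    by blast
  have "coprime m (int L)"
    using m assms(1) by (intro coprime_if_no_common_prime_factor) (auto simp: sieve_survivors_def S_def)
  then show ?thesis
    using m by (auto simp: sieve_survivors_def W_def)
qed

section \<open>Local constancy of the denominators at irrationals\<close>

lemma frac_irrational:
  assumes "(x::real) \<notin> \<rat>"
  shows "frac x \<notin> \<rat>"
proof
  assume "frac x \<in> \<rat>"
  then have "frac x + of_int \<lfloor>x\<rfloor> \<in> \<rat>"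
    by (intro Rats_add) auto
  with assms show False
    by (simp add: frac_def)
qed

lemma cf_rem_irrational: "\<alpha> \<notin> \<rat> \<Longrightarrow> cf_rem \<alpha> n \<notin> \<rat>"
  by (induction n) (auto intro!: irrational_inverse frac_irrational)

lemma irrational_not_Ints: "(x::real) \<notin> \<rat> \<Longrightarrow> x \<notin> \<int>"
  using Ints_subset_Rats by blast

lemma isCont_cf_rem: "\<alpha> \<notin> \<rat> \<Longrightarrow> isCont (\<lambda>x. cf_rem x n) \<alpha>"
proof (induction n)
  case 0
  then show ?case by simp
next
  case (Suc n)
  have "isCont (\<lambda>x. frac (cf_rem x n)) \<alpha>"
    using Suc cf_rem_irrational irrational_not_Ints by (intro isCont_o2[OF _ continuous_frac]) auto
  moreover have "frac (cf_rem \<alpha> n) \<noteq> 0"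
    using cf_rem_irrational[OF Suc.prems] irrational_not_Ints by (simp add: frac_eq_0_iff)
  ultimately show ?case
    by (auto intro!: continuous_intros)
qed

lemma eventually_cf_digit_eq:
  assumes "\<alpha> \<notin> \<rat>"
  shows "\<forall>\<^sub>F x in nhds \<alpha>. cf_digit x n = cf_digit \<alpha> n"
proof -
  have "((\<lambda>x. cf_rem x n) \<longlongrightarrow> cf_rem \<alpha> n) (nhds \<alpha>)"
    using isCont_cf_rem[OF assms] by (metis isCont_def tendsto_at_iff_tendsto_nhds)
  then show ?thesis
    unfolding cf_digit_def
    using assms cf_rem_irrational irrational_not_Ints by (intro eventually_floor_eq) auto
qed

lemma eventually_cf_den_eq: "\<alpha> \<notin> \<rat> \<Longrightarrow> \<forall>\<^sub>F x in nhds \<alpha>. cf_den x n = cf_den \<alpha> n"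
proof (induction \<alpha> n rule: cf_den.induct)
  case (1 g)
  then show ?case by simp
next
  case (2 g)
  then show ?case
    using eventually_cf_digit_eq[of g 1] by simp
next
  case (3 g n)
  then have "\<forall>\<^sub>F x in nhds g. cf_digit x (Suc (Suc n)) = cf_digit g (Suc (Suc n)) \<and>
      cf_den x (Suc n) = cf_den g (Suc n) \<and> cf_den x n = cf_den g n"
    by (intro eventually_conj eventually_cf_digit_eq) simp_all
  then show ?case
    by (rule eventually_mono) simp
qed

section \<open>Dense G-delta sets of irrationals\<close>

text \<open>\<open>- \<rat>\<close> is the intersection of the countably many dense open sets \<open>- {r}\<close>.\<close>

lemma dense_gdelta_Inter_minus_Rats:
  fixes G :: "'i \<Rightarrow> real set"
  assumes "countable I" "\<And>i. i \<in> I \<Longrightarrow> open (G i)" "\<And>i. i \<in> I \<Longrightarrow> closure (G i) = UNIV"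
  shows "gdelta_in euclideanreal ((\<Inter>i\<in>I. G i) - \<rat>) \<and> closure ((\<Inter>i\<in>I. G i) - \<rat>) = UNIV"
proof -
  define \<G> where "\<G> = G ` I \<union> (\<lambda>r. - {r}) ` \<rat>"
  have eq: "(\<Inter>i\<in>I. G i) - \<rat> = \<Inter>\<G>"
    by (auto simp: \<G>_def)
  have "countable \<G>"
    unfolding \<G>_def using assms(1) countable_rat by (intro countable_Un countable_image)
  have open_dense: "open T \<and> closure T = UNIV" if "T \<in> \<G>" for T
    using that assms(2,3) by (auto simp: \<G>_def closure_complement)
  have "gdelta_in euclideanreal (\<Inter>\<G>)"
    using \<open>countable \<G>\<close> open_dense
    by (intro gdelta_in_Inter open_imp_gdelta_in) (auto simp: \<G>_def)
  moreover have "UNIV \<subseteq> closure (\<Inter>\<G>)"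
    using \<open>countable \<G>\<close> open_dense by (intro Baire) auto
  ultimately show ?thesis
    unfolding eq by auto
qed

lemma eq_interior_Un_Rats_minus_Rats:
  fixes A :: "real set"
  assumes "A \<inter> \<rat> = {}" "\<And>\<alpha>. \<alpha> \<in> A \<Longrightarrow> \<forall>\<^sub>F x in nhds \<alpha>. x \<notin> \<rat> \<longrightarrow> x \<in> A"
  shows "A = interior (A \<union> \<rat>) - \<rat>"
proof
  show "interior (A \<union> \<rat>) - \<rat> \<subseteq> A"
    using interior_subset by blast
  show "A \<subseteq> interior (A \<union> \<rat>) - \<rat>"
  proof
    fix \<alpha> assume "\<alpha> \<in> A"
    then obtain S where "open S" "\<alpha> \<in> S" "\<forall>x\<in>S. x \<notin> \<rat> \<longrightarrow> x \<in> A"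
      using assms(2) unfolding eventually_nhds by blast
    then have "\<alpha> \<in> interior (A \<union> \<rat>)"
      by (intro interiorI[of S]) auto
    with \<open>\<alpha> \<in> A\<close> assms(1) show "\<alpha> \<in> interior (A \<union> \<rat>) - \<rat>"
      by blast
  qed
qed

lemma eventually_in_Vset:
  assumes "\<alpha> \<in> Vset \<beta> f l n m"
  shows "\<forall>\<^sub>F x in nhds \<alpha>. x \<notin> \<rat> \<longrightarrow> x \<in> Vset \<beta> f l n m"
proof -
  have "\<alpha> \<notin> \<rat>"
    using assms by (simp add: Vset_def)
  then have "\<forall>\<^sub>F x in nhds \<alpha>. cf_den x n = cf_den \<alpha> n \<and> cf_den x (Suc n) = cf_den \<alpha> (Suc n)"
    by (intro eventually_conj eventually_cf_den_eq)
  then show ?thesis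
    by (rule eventually_mono) (use assms in \<open>simp add: Vset_def\<close>)
qed

lemma eventually_in_Uj_tail:
  assumes "\<alpha> \<in> (\<Union>j\<in>{M..}. Uj \<beta> f l j)"
  shows "\<forall>\<^sub>F x in nhds \<alpha>. x \<notin> \<rat> \<longrightarrow> x \<in> (\<Union>j\<in>{M..}. Uj \<beta> f l j)"
proof -
  obtain j n where jn: "M \<le> j" "1 \<le> n" "\<alpha> \<in> Vset \<beta> f l n j"
    using assms by (auto simp: Uj_def)
  show ?thesis
    using eventually_in_Vset[OF jn(3)] by (rule eventually_mono) (use jn in \<open>auto simp: Uj_def\<close>)
qed

lemma Uj_tail_irrational: "(\<Union>j\<in>{M..}. Uj \<beta> f l j) \<inter> \<rat> = {}"
  by (auto simp: Uj_def Vset_def)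

lemma self_le_strict_mono_from_one:
  fixes l :: "nat \<Rightarrow> nat"
  assumes "\<And>k. k \<ge> 1 \<Longrightarrow> 0 < l k" "\<And>k. k \<ge> 1 \<Longrightarrow> l k < l (Suc k)" "1 \<le> j"
  shows "j \<le> l j"
  using assms(3)
proof (induction j rule: dec_induct)
  case base
  then show ?case using assms(1)[of 1] by simp
next
  case (step j)
  then show ?case using assms(2)[of j] by simp
qed

lemma exists_Vset_near_fraction:
  fixes m :: int
  assumes "1 \<le> l j" "coprime m (int (l j))" "0 < \<epsilon>"
  shows "\<exists>\<alpha> n. 1 \<le> n \<and> \<alpha> \<in> Vset \<beta> f l n j \<and> \<bar>\<alpha> - m / l j\<bar> < \<epsilon>"
proof -
  define q where "q = cf_den \<beta> (eta \<beta> f l j)"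
  obtain \<alpha> n where \<alpha>: "\<alpha> \<notin> \<rat>" "\<bar>\<alpha> - m / l j\<bar> < \<epsilon>" "1 \<le> n" "n \<le> l j"
    "cf_den \<alpha> n = l j" "2 * \<bar>real_of_int q\<bar> * real (l j) ^ 2 < cf_den \<alpha> (Suc n)"
    using exists_irrational_with_convergent_denominator[OF assms] by blast
  have "2 * real_of_int q * real n ^ 2 \<le> 2 * \<bar>real_of_int q\<bar> * real (l j) ^ 2"
    using \<alpha>(4) by (rule_tac mult_mono) (auto simp: power_mono)
  then have "real_of_int (2 * q * int n ^ 2) < cf_den \<alpha> (Suc n)"
    using \<alpha>(6) by simp
  then have "2 * q * int n ^ 2 < cf_den \<alpha> (Suc n)"
    by (simp only: of_int_less_iff)
  then have "\<alpha> \<in> Vset \<beta> f l n j"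
    using \<alpha> by (simp add: Vset_def q_def)
  then show ?thesis
    using \<alpha>(2,3) by blast
qed

lemma dense_Uj_tail:
  assumes "\<And>k. k \<ge> 1 \<Longrightarrow> 0 < l k" "\<And>k. k \<ge> 1 \<Longrightarrow> l k < l (Suc k)"
  shows "closure (\<Union>j\<in>{M..}. Uj \<beta> f l j) = UNIV"
proof -
  have "\<exists>\<alpha>\<in>(\<Union>j\<in>{M..}. Uj \<beta> f l j). dist \<alpha> x < e" if "0 < e" for x e
  proof -
    define \<epsilon> where "\<epsilon> = e / 2"
    define j where "j = max M 1 + nat \<lceil>64 / \<epsilon> ^ 2\<rceil>"
    have "M \<le> j" "1 \<le> j"
      by (auto simp: j_def)
    then have "j \<le> l j"
      using assms by (rule_tac self_le_strict_mono_from_one)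
    moreover have "64 / \<epsilon> ^ 2 < j"
      unfolding j_def by linarith
    ultimately have L: "1 \<le> l j" "64 / \<epsilon> ^ 2 < l j"
      using \<open>1 \<le> j\<close> by linarith+
    have "0 < \<epsilon>"
      using that by (simp add: \<epsilon>_def)
    then obtain m :: int where m: "(x - \<epsilon>) * l j < m" "m \<le> (x - \<epsilon>) * l j + \<epsilon> * l j"
      "coprime m (int (l j))"
      using exists_coprime_in_window[OF L(1) \<open>0 < \<epsilon>\<close> L(2)] by blast
    then have "x - \<epsilon> < m / l j" "m / l j \<le> x"
      using L by (simp_all add: field_simps)
    obtain \<alpha> n where "1 \<le> n" "\<alpha> \<in> Vset \<beta> f l n j" "\<bar>\<alpha> - m / l j\<bar> < \<epsilon>"
      using exists_Vset_near_fraction[of l j, OF L(1) m(3) \<open>0 < \<epsilon>\<close>] by blast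
    moreover from this have "dist \<alpha> x < e"
      using \<open>x - \<epsilon> < m / l j\<close> \<open>m / l j \<le> x\<close> unfolding dist_real_def \<epsilon>_def by linarith
    ultimately show ?thesis
      using \<open>M \<le> j\<close> by (auto simp: Uj_def)
  qed
  then show ?thesis
    by (auto simp: closure_approachable)
qed

theorem theorem6p3:
  fixes \<beta> :: real and f :: "real \<Rightarrow> real" and l :: "nat \<Rightarrow> nat"
  assumes "\<beta> \<notin> \<rat>"
    and "\<And>x. f (x + 1) = f x"
    and "real_analytic f"
    and "\<not> trig_polynomial f"
    and "\<And>k. k \<ge> 1 \<Longrightarrow> 0 < l k"
    and "\<And>k. k \<ge> 1 \<Longrightarrow> l k < l (Suc k)"
    and "\<And>k. k \<ge> 1 \<Longrightarrow> fourier_coeff f (int (l k)) \<noteq> 0"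
    and "(\<lambda>k. Tsum f (l k) / cmod (fourier_coeff f (int (l k)))) \<longlonglongrightarrow> 0"
  shows "gdelta_in euclideanreal (Uset \<beta> f l) \<and> closure (Uset \<beta> f l) = UNIV"
proof -
  define A where "A M = (\<Union>j\<in>{M..}. Uj \<beta> f l j)" for M
  define G where "G M = interior (A M \<union> \<rat>)" for M
  have A_eq: "A M = G M - \<rat>" for M
    unfolding A_def G_def using Uj_tail_irrational eventually_in_Uj_tail
    by (rule eq_interior_Un_Rats_minus_Rats)
  have "closure (G M) = UNIV" for M
    using dense_Uj_tail[of l, OF assms(5,6)] closure_mono[of "A M" "G M"] A_eq
    unfolding A_def by blast
  moreover have "Uset \<beta> f l = (\<Inter>M\<in>{1..}. G M) - \<rat>"
    unfolding Uset_def A_eq[unfolded A_def] by auto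
  ultimately show ?thesis
    using dense_gdelta_Inter_minus_Rats[of "{1..}" G] by (simp add: G_def)
qed

end
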